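(* For every $n\ge1$, $$1-\omega^n=-\prod_{d\mid n}C_{3d}(\lambda)\prod_{\substack{d\mid n\\ 3\nmid d}}C_d(\lambda),$$ where $C_d(x)$ denotes the $d$-th cyclotomic polynomial.
   Context: $\lambda$ is the real root of $x^3+x^2+x-1$ and $\omega=\lambda^3$. Products run over positive divisors $d$ of $n$. *)

theory Defs
  imports "HOL-Analysis.Analysis" "HOL-Computational_Algebra.Polynomial"
begin

definition cyclotomic :: "nat \<Rightarrow> complex poly" where
  "cyclotomic d = (\<Prod>k\<in>{k. 1 \<le> k \<and> k \<le> d \<and> coprime k d}.
      [:- cis (2 * pi * real k / real d), 1:])"

end

theory Submission
  imports Defs "HOL-Computational_Algebra.Fundamental_Theorem_Algebra"
begin

text \<open>Since \<open>\<omega>^n = \<lambda>^(3n)\<close>, the identity is \<open>x^m - 1 = \<Prod>\<^sub>d\<^sub>|\<^sub>m C\<^sub>d(x)\<close> for \<open>m = 3n\<close>,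
  once the divisors of \<open>3n\<close> are split into the \<open>3d\<close> with \<open>d | n\<close> and the divisors of \<open>n\<close>
  prime to 3. That factorisation comes from \<open>x^m - 1 = \<Prod>\<^sub>k\<^sub><\<^sub>m (x - e^(2\<pi>ik/m))\<close> by writing
  each fraction \<open>k/m\<close> in lowest terms. Nothing about \<open>\<lambda>\<close> beyond being a number is used.\<close>

lemma rsquarefree_monom_minus_one:
  assumes "m > 0"
  shows "rsquarefree (monom (1 :: 'a :: field_char_0) m - 1)"
  unfolding rsquarefree_roots
proof (intro allI notI)
  fix a :: 'a
  assume "poly (monom 1 m - 1) a = 0 \<and> poly (pderiv (monom 1 m - 1)) a = 0"
  then have "a ^ m = 1" and "of_nat m * a ^ (m - 1) = 0"
    by (simp_all add: poly_monom pderiv_diff pderiv_monom)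
  then show False
    using assms by (auto simp: power_0_left)
qed

lemma monom_minus_one_eq_prod_cis:
  assumes "m > 0"
  shows "monom 1 m - 1 = (\<Prod>k<m. [:- cis (2 * pi * real k / real m), 1:])"
proof -
  let ?p = "monom 1 m - 1 :: complex poly"
  have "lead_coeff ?p = 1"
    using assms lead_coeff_add_le[of "-1" "monom 1 m :: complex poly"] by (simp add: degree_monom_eq)
  then have "?p = (\<Prod>z | poly ?p z = 0. [:- z, 1:])"
    using complex_poly_decompose_rsquarefree[OF rsquarefree_monom_minus_one[OF assms]] by simp
  also have "\<dots> = (\<Prod>z | z ^ m = 1. [:- z, 1:])"
    by (simp add: poly_monom)
  also have "\<dots> = (\<Prod>k<m. [:- cis (2 * pi * real k / real m), 1:])"
    by (rule prod.reindex_bij_betw[OF Complex.bij_betw_roots_unity[OF assms], symmetric])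
  finally show ?thesis .
qed

lemma bij_betw_lowest_terms:
  fixes m :: nat
  assumes "m > 0"
  shows "bij_betw (\<lambda>j. (m div gcd j m, j div gcd j m)) {1..m}
    (SIGMA d:{d. d dvd m}. {k. 1 \<le> k \<and> k \<le> d \<and> coprime k d})"
    (is "bij_betw ?reduce _ ?fractions")
proof (rule bij_betw_byWitness[where f' = "\<lambda>(d, k). k * (m div d)"])
  have reduce: "?reduce j \<in> ?fractions \<and> (\<lambda>(d, k). k * (m div d)) (?reduce j) = j"
    if "j \<in> {1..m}" for j
  proof -
    define g where "g = gcd j m"
    obtain c c' where c: "m = g * c" and c': "j = g * c'"
      unfolding g_def by (meson dvd_def gcd_dvd1 gcd_dvd2)
    have "g > 0"
      using that by (simp add: g_def)
    with that assms c c' have "c > 0" "c' > 0"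
      by auto
    then have "m div g = c" "j div g = c'" "m div c = g"
      using \<open>g > 0\<close> c c' by simp_all
    moreover have "coprime (j div g) (m div g)"
      unfolding g_def using that by (intro div_gcd_coprime) auto
    moreover have "c' \<le> c"
      using that c c' \<open>g > 0\<close> by simp
    ultimately show ?thesis
      using c c' \<open>c' > 0\<close> unfolding g_def[symmetric] by simp
  qed
  have expand: "?reduce (k * (m div d)) = (d, k) \<and> k * (m div d) \<in> {1..m}"
    if "d dvd m" "1 \<le> k" "k \<le> d" "coprime k d" for d k
  proof -
    obtain e where e: "m = d * e" using \<open>d dvd m\<close> by blast
    with assms have "e > 0" "d > 0" by auto
    then have "m div d = e" "m div e = d" using e by simp_all
    moreover have "gcd (k * e) m = e"
      using \<open>coprime k d\<close> e by (simp add: gcd_mult_right coprime_iff_gcd_eq_1 gcd.commute)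
    ultimately show ?thesis using e that \<open>e > 0\<close> by simp
  qed
  show "\<forall>j\<in>{1..m}. (\<lambda>(d, k). k * (m div d)) (?reduce j) = j"
    using reduce by blast
  show "\<forall>a\<in>?fractions. ?reduce ((\<lambda>(d, k). k * (m div d)) a) = a"
    using expand by auto
  show "?reduce ` {1..m} \<subseteq> ?fractions"
    using reduce by blast
  show "(\<lambda>(d, k). k * (m div d)) ` ?fractions \<subseteq> {1..m}"
    using expand by auto
qed

lemma prod_cyclotomic_divisors:
  assumes "m > 0"
  shows "(\<Prod>d | d dvd m. cyclotomic d) = monom 1 m - 1"
proof -
  let ?factor = "\<lambda>(d, k). [:- cis (2 * pi * real k / real d), 1:]"
  have "(\<Prod>d | d dvd m. cyclotomic d)
      = prod ?factor (SIGMA d:{d. d dvd m}. {k. 1 \<le> k \<and> k \<le> d \<and> coprime k d})"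
    unfolding cyclotomic_def using assms by (subst prod.Sigma) auto
  also have "\<dots> = (\<Prod>j \<in> {1..m}. ?factor (m div gcd j m, j div gcd j m))"
    by (rule prod.reindex_bij_betw[OF bij_betw_lowest_terms[OF assms], symmetric])
  also have "\<dots> = (\<Prod>j \<in> {1..m}. ?factor (m, j))"
  proof (rule prod.cong[OF refl])
    fix j assume "j \<in> {1..m}"
    then have "real (j div gcd j m) / real (m div gcd j m) = real j / real m"
      by (simp add: real_of_nat_div)
    then show "?factor (m div gcd j m, j div gcd j m) = ?factor (m, j)"
      by (simp add: times_divide_eq_right[symmetric] del: times_divide_eq_right)
  qed
  also have "\<dots> = (\<Prod>j<m. ?factor (m, j))"
  proof -
    have "{1..m} = insert m {1..<m}" "{..<m} = insert 0 {1..<m}"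
      using assms by auto
    moreover have "?factor (m, m) = ?factor (m, 0)"
      using assms by simp
    ultimately show ?thesis by simp
  qed
  also have "\<dots> = monom 1 m - 1"
    using monom_minus_one_eq_prod_cis[OF assms] by simp
  finally show ?thesis .
qed

lemma divisors_mult_prime:
  fixes p n :: nat
  assumes "prime p"
  shows "{e. e dvd p * n} = (\<lambda>d. p * d) ` {d. d dvd n} \<union> {d. d dvd n \<and> \<not> p dvd d}"
proof (intro set_eqI iffI)
  fix e assume "e \<in> {e. e dvd p * n}"
  then have "e dvd p * n" by simp
  show "e \<in> (\<lambda>d. p * d) ` {d. d dvd n} \<union> {d. d dvd n \<and> \<not> p dvd d}"
  proof (cases "p dvd e")
    case True
    then obtain d where "e = p * d" by blast
    with \<open>e dvd p * n\<close> assms show ?thesis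
      by (auto simp: prime_gt_0_nat)
  next
    case False
    then have "coprime e p"
      using assms by (metis prime_imp_coprime coprime_commute)
    with \<open>e dvd p * n\<close> have "e dvd n"
      by (simp add: coprime_dvd_mult_right_iff)
    with False show ?thesis by simp
  qed
qed auto

lemma prod_divisors_mult_prime:
  fixes p n :: nat and f :: "nat \<Rightarrow> 'a :: comm_monoid_mult"
  assumes "prime p" and "n > 0"
  shows "(\<Prod>e | e dvd p * n. f e) = (\<Prod>d | d dvd n. f (p * d)) * (\<Prod>d | d dvd n \<and> \<not> p dvd d. f d)"
proof -
  have "inj_on (\<lambda>d. p * d) {d. d dvd n}"
    using assms by (simp add: inj_on_def prime_gt_0_nat)
  moreover have "(\<lambda>d. p * d) ` {d. d dvd n} \<inter> {d. d dvd n \<and> \<not> p dvd d} = {}"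
    by auto
  ultimately show ?thesis
    using assms by (simp add: divisors_mult_prime prod.union_disjoint prod.reindex)
qed

theorem mainTheorem6:
  fixes lam :: real and n :: nat
  assumes lam_root: "lam ^ 3 + lam ^ 2 + lam - 1 = 0"
    and n_pos: "n \<ge> 1"
  shows "complex_of_real (1 - (lam ^ 3) ^ n) =
    - ((\<Prod>d\<in>{d. d dvd n}. poly (cyclotomic (3 * d)) (complex_of_real lam)) *
       (\<Prod>d\<in>{d. d dvd n \<and> \<not> 3 dvd d}. poly (cyclotomic d) (complex_of_real lam)))"
proof -
  let ?x = "complex_of_real lam"
  have "(\<Prod>d | d dvd n. poly (cyclotomic (3 * d)) ?x) *
      (\<Prod>d | d dvd n \<and> \<not> 3 dvd d. poly (cyclotomic d) ?x)
      = (\<Prod>e | e dvd 3 * n. poly (cyclotomic e) ?x)"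
    using n_pos by (intro prod_divisors_mult_prime[symmetric]) auto
  also have "\<dots> = poly (\<Prod>e | e dvd 3 * n. cyclotomic e) ?x"
    by (simp add: poly_prod)
  also have "\<dots> = ?x ^ (3 * n) - 1"
    using n_pos by (simp add: prod_cyclotomic_divisors poly_monom)
  finally show ?thesis
    by (simp add: power_mult)
qed

end
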